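(* Let $H$ be a dephased complex Hadamard matrix of order $6$. If some row of $H$ other than the first (respectively, some column other than the first) contains three entries equal to the same number $x$, then $x\in\{1,-1\}$ and that row (respectively column) is, up to permutation of its entries, equal to $(1,1,1,-1,-1,-1)$.
   Context: A complex Hadamard matrix of order $n$ is an $n\times n$ complex matrix $H$ all of whose entries have modulus $1$ and which satisfies $HH^\ast=nI_n$. It is dephased if all entries of its first row and first column equal $1$. *)

theory Defs
  imports "HOL-Analysis.Analysis" "HOL-Combinatorics.Permutations"
begin

text \<open>An n x n complex matrix is represented as a function H :: nat => nat => complex,
  only the entries H i j with i < n and j < n being relevant (indices 0..n-1).\<close>

definition complex_hadamard :: "nat \<Rightarrow> (nat \<Rightarrow> nat \<Rightarrow> complex) \<Rightarrow> bool" where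
  "complex_hadamard n H \<longleftrightarrow>
     (\<forall>i<n. \<forall>j<n. norm (H i j) = 1) \<and>
     (\<forall>i<n. \<forall>k<n. (\<Sum>j<n. H i j * cnj (H k j)) = (if i = k then of_nat n else 0))"

definition dephased :: "nat \<Rightarrow> (nat \<Rightarrow> nat \<Rightarrow> complex) \<Rightarrow> bool" where
  "dephased n H \<longleftrightarrow> (\<forall>j<n. H 0 j = 1) \<and> (\<forall>i<n. H i 0 = 1)"

definition pm_vec :: "nat \<Rightarrow> complex" where
  "pm_vec j = (if j < 3 then 1 else -1)"

end

theory Submission imports Defs "Jordan_Normal_Form.Determinant" begin

(* In a dephased complex Hadamard matrix of order n, orthogonality of a row
   (column) other than the first to the first row (column), which consists of ones, says that
   its entries sum to zero.  So it suffices to study a unit vector v of length 2m with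
   v 0 = 1 and entry sum 0 which takes a value x on a set J of m positions.  The remaining m
   entries are unit complex numbers summing to -m x; by the equality case of the triangle
   inequality they all equal -x.  Since v 0 = 1, x = 1 or x = -1, so v is a +-1 vector with
   exactly m entries equal to 1, i.e. a permutation of (1,...,1,-1,...,-1). *)

lemma unit_Re_1_eq_1:
  fixes w :: complex
  assumes "norm w = 1" and "Re w = 1"
  shows "w = 1"
proof -
  have "(Re w)\<^sup>2 + (Im w)\<^sup>2 = 1" using assms(1) by (simp add: cmod_def)
  then have "Im w = 0" using assms(2) by simp
  then show ?thesis using assms(2) complex_eq_iff by auto
qed

lemma unit_sum_eq_card_imp_const:
  fixes v :: "'a \<Rightarrow> complex"
  assumes fin: "finite K" and unit: "\<forall>k\<in>K. norm (v k) = 1" and c: "norm c = 1"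
    and sum: "(\<Sum>k\<in>K. v k) = of_nat (card K) * c"
  shows "\<forall>k\<in>K. v k = c"
proof -
  have cc: "c * cnj c = 1" using c by (simp add: complex_norm_square[symmetric])
  define w where "w k = v k * cnj c" for k
  have norm_w: "norm (w k) = 1" if "k \<in> K" for k
    using unit c that by (simp add: w_def norm_mult)
  have "(\<Sum>k\<in>K. w k) = of_nat (card K)"
    unfolding w_def sum_distrib_right[symmetric] sum using cc by (simp add: mult.assoc)
  then have "(\<Sum>k\<in>K. 1 - Re (w k)) = 0"
    by (simp add: sum_subtractf Re_sum[symmetric])
  moreover have "\<forall>k\<in>K. 0 \<le> 1 - Re (w k)"
    using norm_w complex_Re_le_cmod by (metis diff_ge_0_iff_ge)
  ultimately have "\<forall>k\<in>K. 1 - Re (w k) = 0"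
    using sum_nonneg_eq_0_iff[OF fin, of "\<lambda>k. 1 - Re (w k)"] by blast
  then have "\<forall>k\<in>K. Re (w k) = 1" by simp
  then have w1: "\<forall>k\<in>K. w k = 1" using norm_w unit_Re_1_eq_1 by blast
  show ?thesis
  proof
    fix k assume "k \<in> K"
    then have "v k * (c * cnj c) = c" using w1 by (simp add: w_def algebra_simps)
    then show "v k = c" using cc by simp
  qed
qed

lemma half_constant_balanced:
  fixes v :: "nat \<Rightarrow> complex"
  assumes unit: "\<forall>j<2*m. norm (v j) = 1" and sum0: "(\<Sum>j<2*m. v j) = 0"
    and J: "J \<subseteq> {..<2*m}" "card J = m" "\<forall>j\<in>J. v j = x" and "m > 0"
  shows "\<forall>k\<in>{..<2*m} - J. v k = - x"
proof -
  define K where "K = {..<2*m} - J"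
  obtain j where "j \<in> J" using J(2) \<open>m > 0\<close> by fastforce
  then have x: "norm (- x) = 1" using unit J(1,3) by force
  have card_K: "card K = m"
    using J(1,2) by (simp add: K_def card_Diff_subset finite_subset)
  have sum_J: "(\<Sum>j\<in>J. v j) = of_nat m * x"
    using J(2,3) by simp
  have "0 = (\<Sum>k\<in>K. v k) + (\<Sum>j\<in>J. v j)"
    unfolding sum0[symmetric] K_def by (rule sum.subset_diff[OF J(1) finite_lessThan])
  then have sum_K: "(\<Sum>k\<in>K. v k) = of_nat (card K) * (- x)"
    unfolding sum_J card_K by (simp add: add_eq_0_iff2)
  have "finite K" and unit_K: "\<forall>k\<in>K. norm (v k) = 1"
    using unit by (simp_all add: K_def)
  then have "\<forall>k\<in>K. v k = - x"
    using unit_sum_eq_card_imp_const[OF _ unit_K x sum_K] by blast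
  then show ?thesis unfolding K_def .
qed

lemma permutation_onto_subset:
  assumes P: "P \<subseteq> {..<n::nat}" "card P = k"
  shows "\<exists>\<sigma>. \<sigma> permutes {..<n} \<and> \<sigma> ` {..<k} = P \<and> \<sigma> ` {k..<n} = {..<n} - P"
proof -
  have fin: "finite P" using P(1) finite_subset by blast
  have "k \<le> n" using P card_mono[of "{..<n}" P] by auto
  obtain f where f: "bij_betw f {..<k} P"
    using finite_same_card_bij[of "{..<k}" P] fin P(2) by auto
  have "card ({..<n} - P) = card {k..<n}" using P fin by (simp add: card_Diff_subset)
  then obtain g where g: "bij_betw g {k..<n} ({..<n} - P)"
    using finite_same_card_bij[of "{k..<n}" "{..<n} - P"] by auto
  define h where "h j = (if j < k then f j else if j < n then g j else j)" for j
  have h1: "bij_betw h {..<k} P"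
    using f by (rule bij_betw_cong[THEN iffD1, rotated]) (auto simp: h_def)
  have h2: "bij_betw h {k..<n} ({..<n} - P)"
    using g by (rule bij_betw_cong[THEN iffD1, rotated]) (auto simp: h_def)
  have "bij_betw h ({..<k} \<union> {k..<n}) (P \<union> ({..<n} - P))"
    by (rule bij_betw_combine[OF h1 h2]) auto
  moreover have "{..<k} \<union> {k..<n} = {..<n}" using \<open>k \<le> n\<close> by auto
  moreover have "P \<union> ({..<n} - P) = {..<n}" using P(1) by auto
  ultimately have "h permutes {..<n}"
    by (intro bij_imp_permutes) (auto simp: h_def)
  then show ?thesis using h1 h2 by (auto simp: bij_betw_def)
qed

lemma balanced_vector_sign_pattern:
  fixes v :: "nat \<Rightarrow> complex"
  assumes unit: "\<forall>j<2*m. norm (v j) = 1" and sum0: "(\<Sum>j<2*m. v j) = 0" and v0: "v 0 = 1"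
    and J: "J \<subseteq> {..<2*m}" "card J = m" "\<forall>j\<in>J. v j = x" and "m > 0"
  shows "x \<in> {1, -1} \<and>
         (\<exists>\<sigma>. \<sigma> permutes {..<2*m} \<and> (\<forall>j<2*m. v (\<sigma> j) = (if j < m then 1 else -1)))"
proof -
  have other: "\<forall>k\<in>{..<2*m} - J. v k = - x"
    using half_constant_balanced[OF unit sum0 J \<open>m > 0\<close>] .
  have x_or_neg: "v j = x \<or> v j = - x" if "j < 2*m" for j
    using that J(3) other by blast
  from x_or_neg[of 0] have x: "x \<in> {1, -1}" using v0 \<open>m > 0\<close> by (auto simp: minus_equation_iff)
  then have sign: "v j = 1 \<or> v j = -1" if "j < 2*m" for j
    using x_or_neg[OF that] by auto
  define P where "P = {j. j < 2*m \<and> v j = 1}"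
  have "P = (if x = 1 then J else {..<2*m} - J)"
  proof (cases "x = 1")
    case True
    then have "v k \<noteq> 1" if "k \<in> {..<2*m} - J" for k using other that by force
    then show ?thesis using True J(1,3) by (auto simp: P_def)
  next
    case False
    then show ?thesis using x J(3) other by (auto simp: P_def)
  qed
  then have card_P: "card P = m"
    using J by (auto simp: card_Diff_subset finite_subset)
  have "P \<subseteq> {..<2*m}" by (auto simp: P_def)
  then obtain \<sigma> where \<sigma>: "\<sigma> permutes {..<2*m}" "\<sigma> ` {..<m} = P" "\<sigma> ` {m..<2*m} = {..<2*m} - P"
    using permutation_onto_subset card_P by blast
  have "v (\<sigma> j) = (if j < m then 1 else -1)" if "j < 2*m" for j
  proof (cases "j < m")
    case True
    then show ?thesis using \<sigma>(2) by (auto simp: P_def)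
  next
    case False
    then have "\<sigma> j \<in> {..<2*m} - P" using \<sigma>(3) that by auto
    then show ?thesis using False sign by (auto simp: P_def)
  qed
  then show ?thesis using x \<sigma>(1) by blast
qed

corollary three_equal_entries_sign_pattern:
  fixes v :: "nat \<Rightarrow> complex"
  assumes "\<forall>j<6. norm (v j) = 1" and "(\<Sum>j<6. v j) = 0" and "v 0 = 1"
    and "j1 < 6" "j2 < 6" "j3 < 6" "j1 \<noteq> j2" "j1 \<noteq> j3" "j2 \<noteq> j3"
    and "v j1 = x" "v j2 = x" "v j3 = x"
  shows "x \<in> {1, -1} \<and> (\<exists>\<sigma>. \<sigma> permutes {..<6} \<and> (\<forall>j<6. v (\<sigma> j) = pm_vec j))"
  using balanced_vector_sign_pattern[of 3 v "{j1, j2, j3}" x] assms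
  by (simp add: pm_vec_def)

text \<open>The columns of a complex Hadamard matrix are orthogonal too: H H* = n I forces
  H* H = n I, since a one-sided inverse of a square matrix is two-sided.\<close>
lemma complex_hadamard_columns_orthogonal:
  fixes H :: "nat \<Rightarrow> nat \<Rightarrow> complex"
  assumes had: "complex_hadamard n H" and j: "j < n" "j' < n"
  shows "(\<Sum>i<n. cnj (H i j) * H i j') = (if j = j' then of_nat n else 0)"
proof -
  define A where "A = Matrix.mat n n (\<lambda>(i, j). H i j)"
  define B where "B = Matrix.mat n n (\<lambda>(i, j). cnj (H j i) / of_nat n)"
  have n: "of_nat n \<noteq> (0::complex)" using j by simp
  have "A * B = 1\<^sub>m n"
  proof (rule eq_matI)
    fix i k assume "i < dim_row (1\<^sub>m n)" "k < dim_col (1\<^sub>m n)"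
    then have ik: "i < n" "k < n" by simp_all
    then have "(A * B) $$ (i, k) = (\<Sum>j<n. H i j * cnj (H k j)) / of_nat n"
      by (simp add: A_def B_def scalar_prod_def sum_divide_distrib atLeast0LessThan)
    also have "\<dots> = (if i = k then of_nat n else 0) / of_nat n"
      using had ik by (simp add: complex_hadamard_def)
    also have "\<dots> = 1\<^sub>m n $$ (i, k)" using ik n by simp
    finally show "(A * B) $$ (i, k) = 1\<^sub>m n $$ (i, k)" .
  qed (simp_all add: A_def B_def)
  then have BA: "B * A = 1\<^sub>m n"
    by (rule mat_mult_left_right_inverse[rotated 2]) (simp_all add: A_def B_def)
  have "(\<Sum>i<n. cnj (H i j) * H i j') / of_nat n = (B * A) $$ (j, j')"
    using j by (simp add: A_def B_def scalar_prod_def sum_divide_distrib atLeast0LessThan)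
  then have "(\<Sum>i<n. cnj (H i j) * H i j') / of_nat n = 1\<^sub>m n $$ (j, j')"
    unfolding BA .
  then show ?thesis using j n by (simp add: divide_eq_eq split: if_splits)
qed

lemma dephased_row_sum_zero:
  assumes "complex_hadamard n H" "dephased n H" "0 < i" "i < n"
  shows "(\<Sum>j<n. H i j) = 0"
proof -
  have "(\<Sum>j<n. H i j * cnj (H 0 j)) = 0"
    using assms by (auto simp: complex_hadamard_def)
  then show ?thesis using assms(2) by (simp add: dephased_def)
qed

lemma dephased_column_sum_zero:
  assumes "complex_hadamard n H" "dephased n H" "0 < j" "j < n"
  shows "(\<Sum>i<n. H i j) = 0"
proof -
  have "(\<Sum>i<n. cnj (H i 0) * H i j) = 0"
    using complex_hadamard_columns_orthogonal[OF assms(1), of 0 j] assms(3,4) by simp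
  then show ?thesis using assms(2) by (simp add: dephased_def)
qed

theorem lemma2p22:
  fixes H :: "nat \<Rightarrow> nat \<Rightarrow> complex"
  assumes "complex_hadamard 6 H" and "dephased 6 H"
  shows "(\<forall>i x. 0 < i \<and> i < 6 \<and>
            (\<exists>j1 j2 j3. j1 < 6 \<and> j2 < 6 \<and> j3 < 6 \<and> j1 \<noteq> j2 \<and> j1 \<noteq> j3 \<and> j2 \<noteq> j3 \<and>
               H i j1 = x \<and> H i j2 = x \<and> H i j3 = x)
          \<longrightarrow> x \<in> {1, -1} \<and> (\<exists>\<sigma>. \<sigma> permutes {..<6} \<and> (\<forall>j<6. H i (\<sigma> j) = pm_vec j)))
       \<and> (\<forall>j x. 0 < j \<and> j < 6 \<and>
            (\<exists>i1 i2 i3. i1 < 6 \<and> i2 < 6 \<and> i3 < 6 \<and> i1 \<noteq> i2 \<and> i1 \<noteq> i3 \<and> i2 \<noteq> i3 \<and>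
               H i1 j = x \<and> H i2 j = x \<and> H i3 j = x)
          \<longrightarrow> x \<in> {1, -1} \<and> (\<exists>\<sigma>. \<sigma> permutes {..<6} \<and> (\<forall>i<6. H (\<sigma> i) j = pm_vec i)))"
proof -
  have unit: "\<forall>i<6. \<forall>j<6. norm (H i j) = 1"
    using assms(1) by (simp add: complex_hadamard_def)
  have first: "\<forall>j<6. H 0 j = 1" "\<forall>i<6. H i 0 = 1"
    using assms(2) by (simp_all add: dephased_def)
  show ?thesis
  proof (rule conjI; intro allI impI; elim conjE exE)
    fix i x j1 j2 j3 assume "0 < i" "i < 6"
      "j1 < 6" "j2 < 6" "j3 < 6" "j1 \<noteq> j2" "j1 \<noteq> j3" "j2 \<noteq> j3" "H i j1 = x" "H i j2 = x" "H i j3 = x"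
    then show "x \<in> {1, -1} \<and> (\<exists>\<sigma>. \<sigma> permutes {..<6} \<and> (\<forall>j<6. H i (\<sigma> j) = pm_vec j))"
      using unit first dephased_row_sum_zero[OF assms]
      by (intro three_equal_entries_sign_pattern[of "H i" j1 j2 j3 x]) simp_all
  next
    fix j x i1 i2 i3 assume "0 < j" "j < 6"
      "i1 < 6" "i2 < 6" "i3 < 6" "i1 \<noteq> i2" "i1 \<noteq> i3" "i2 \<noteq> i3" "H i1 j = x" "H i2 j = x" "H i3 j = x"
    then show "x \<in> {1, -1} \<and> (\<exists>\<sigma>. \<sigma> permutes {..<6} \<and> (\<forall>i<6. H (\<sigma> i) j = pm_vec i))"
      using unit first dephased_column_sum_zero[OF assms]
      by (intro three_equal_entries_sign_pattern[of "\<lambda>i. H i j" i1 i2 i3 x]) simp_all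
  qed
qed

end
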